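(* For every integer $n\ge2$ the following hold (vector sums with zero-padding on the right; $(0,v)$ denotes $v$ with a $0$ prepended): 1. If $n$ is odd, $\gamma^{(n,(n+1)/2)}=\sum_{k=1}^{(n-1)/2}\big[\widetilde\gamma^{(n-1,k)}+\gamma^{(n-1,\overline{k})}\big]$. 2. If $n$ is odd, $\gamma^{(n,\overline{(n+1)/2})}=\sum_{k=1}^{(n-1)/2}\big[\widetilde\gamma^{(n-1,\overline{k})}+(0,\gamma^{(n-1,k)})\big]$. 3. For $1\le j<(n+1)/2$: $\gamma^{(n,j)}=2\sum_{k=1}^{\lfloor n/2\rfloor}\gamma^{(n-1,\overline{k})}+2\sum_{k=1}^{j-1}\widetilde\gamma^{(n-1,k)}+\sum_{k=j}^{\lfloor n/2\rfloor}\gamma^{(n-1,k)}$. 4. For $1\le j<(n+1)/2$: $\gamma^{(n,\overline{j})}=2\sum_{k=1}^{\lfloor n/2\rfloor}(0,\gamma^{(n-1,k)})+2\sum_{k=1}^{j-1}\widetilde\gamma^{(n-1,\overline{k})}+\sum_{k=j}^{\lfloor n/2\rfloor}\gamma^{(n-1,\overline{k})}$. 5. For $1\le j<(n+1)/2$: $\widetilde\gamma^{(n,j)}=\sum_{k=1}^{j-1}\widetilde\gamma^{(n-1,k)}+2\sum_{k=j}^{\lfloor n/2\rfloor}(0,\gamma^{(n-1,k)})+\sum_{k=1}^{\lfloor n/2\rfloor}\gamma^{(n-1,\overline{k})}$. 6. For $1\le j<(n+1)/2$: $\widetilde\gamma^{(n,\overline{j})}=\sum_{k=1}^{j-1}\widetilde\gamma^{(n-1,\overline{k})}+2\sum_{k=j}^{\lfloor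 n/2\rfloor}(0,\gamma^{(n-1,\overline{k})})+\sum_{k=1}^{\lfloor n/2\rfloor}(0,\gamma^{(n-1,k)})$.
   Context: $B_n$ is the group of signed permutations $\sigma=\sigma_1\cdots\sigma_n$ of $\{\pm1,\dots,\pm n\}$ ($\sigma_{-i}=-\sigma_i$); write $\bar s=-s$. With $\sigma_0=0$, $\mathrm{des}_B(\sigma)=|\{i\in\{0,\dots,n-1\}:\sigma_i>\sigma_{i+1}\}|$. For $j\in\{\pm1,\dots,\pm n\}$ let $B^+_{n,j}(t)=\sum t^{\mathrm{des}_B(\sigma)}$ over $\sigma\in B_n$ with $\sigma_n>0$ and $\sigma_1=j$. For $1\le j\le n$ set $\mathbb{B}^+_{n,j}=B^+_{n,j}+B^+_{n,n-j+1}$ and $\mathbb{B}^+_{n,\bar j}=B^+_{n,\bar j}+B^+_{n,\overline{n-j+1}}$ if $j\ne(n+1)/2$, and $\mathbb{B}^+_{n,j}=B^+_{n,j}$, $\mathbb{B}^+_{n,\bar j}=B^+_{n,\bar j}$ if $j=(n+1)/2$. For $1\le j<(n+1)/2$ set $\widetilde{\mathbb{B}}^+_{n,j}(t)=tB^+_{n,j}(t)+B^+_{n,n-j+1}(t)$ and $\widetilde{\mathbb{B}}^+_{n,\bar j}(t)=tB^+_{n,\overline{n-j+1}}(t)+B^+_{n,\bar j}(t)$. For a polynomial $P$ with $P(t)=t^mP(1/t)$, its $\gamma$-vector with respect to $m$ is the unique $(\gamma_0,\dots,\gamma_{\lfloor m/2\rfloor})$ with $P(t)=\sum_k\gamma_kt^k(1+t)^{m-2k}$.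 Then $\gamma^{(n,j)}$, $\gamma^{(n,\bar j)}$, $\widetilde\gamma^{(n,j)}$, $\widetilde\gamma^{(n,\bar j)}$ are the $\gamma$-vectors of $\mathbb{B}^+_{n,j}$, $\mathbb{B}^+_{n,\bar j}$, $\widetilde{\mathbb{B}}^+_{n,j}$, $\widetilde{\mathbb{B}}^+_{n,\bar j}$ with respect to $m=n-1$, $n$, $n$, $n+1$ respectively. *)

theory Defs
  imports "HOL-Computational_Algebra.Polynomial"
begin

definition signed_perms :: "nat \<Rightarrow> int list set" where
  "signed_perms n = {s. length s = n \<and> set (map abs s) = {1..int n}}"

definition desB :: "int list \<Rightarrow> nat" where
  "desB s = card {i \<in> {0..<length s}. (0 # s) ! i > (0 # s) ! (i + 1)}"

definition Bplus :: "nat \<Rightarrow> int \<Rightarrow> int poly" where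
  "Bplus n j = (\<Sum>s\<in>{s \<in> signed_perms n. last s > 0 \<and> hd s = j}. monom 1 (desB s))"

definition BBpos :: "nat \<Rightarrow> nat \<Rightarrow> int poly" where
  "BBpos n j = (if 2 * j = n + 1 then Bplus n (int j)
                else Bplus n (int j) + Bplus n (int (n + 1 - j)))"

definition BBneg :: "nat \<Rightarrow> nat \<Rightarrow> int poly" where
  "BBneg n j = (if 2 * j = n + 1 then Bplus n (- int j)
                else Bplus n (- int j) + Bplus n (- int (n + 1 - j)))"

definition BBtpos :: "nat \<Rightarrow> nat \<Rightarrow> int poly" where
  "BBtpos n j = pCons 0 (Bplus n (int j)) + Bplus n (int (n + 1 - j))"

definition BBtneg :: "nat \<Rightarrow> nat \<Rightarrow> int poly" where
  "BBtneg n j = pCons 0 (Bplus n (- int (n + 1 - j))) + Bplus n (- int j)"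

text \<open>gamma-vector of P with respect to m, as a function nat => int that vanishes
  beyond floor(m/2) (i.e. the vector padded with zeros on the right).\<close>
definition gamma_vec :: "nat \<Rightarrow> int poly \<Rightarrow> (nat \<Rightarrow> int)" where
  "gamma_vec m P = (THE g. (\<forall>i > m div 2. g i = 0) \<and>
      P = (\<Sum>k\<le>m div 2. smult (g k) (monom 1 k * [:1, 1:] ^ (m - 2 * k))))"

definition gam_pos :: "nat \<Rightarrow> nat \<Rightarrow> nat \<Rightarrow> int" where
  "gam_pos n j = gamma_vec (n - 1) (BBpos n j)"

definition gam_neg :: "nat \<Rightarrow> nat \<Rightarrow> nat \<Rightarrow> int" where
  "gam_neg n j = gamma_vec n (BBneg n j)"

definition gamt_pos :: "nat \<Rightarrow> nat \<Rightarrow> nat \<Rightarrow> int" where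
  "gamt_pos n j = gamma_vec n (BBtpos n j)"

definition gamt_neg :: "nat \<Rightarrow> nat \<Rightarrow> nat \<Rightarrow> int" where
  "gamt_neg n j = gamma_vec (n + 1) (BBtneg n j)"

definition shift0 :: "(nat \<Rightarrow> int) \<Rightarrow> nat \<Rightarrow> int" where
  "shift0 v i = (if i = 0 then 0 else v (i - 1))"

end

theory Submission
  imports Defs
begin

(* Deleting the first letter j of a signed permutation with positive last letter and
   standardising the remaining letters is a bijection onto the signed permutations of size
   n - 1 with positive last letter, and it changes the type-B descent number by 0 or 1,
   depending only on j and on the new first letter x.  Hence B^+_{n,j} is a combination of
   the B^+_{n-1,x} with coefficients 1 and t.  Cutting the letters x into the blocks
   1..j-1, j..n-j, n+1-j..n-1 and their negatives, the bold and tilde polynomials of level n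
   become sums of those of level n - 1 multiplied by 2, t or 1 + t.  Multiplying by 1 + t
   keeps a gamma vector and raises m by one, multiplying by t shifts it and raises m by two,
   and gamma vectors are unique, so the polynomial recurrences become the stated recurrences
   of gamma vectors. *)

fun descents :: "'a::linorder list \<Rightarrow> nat" where
  "descents (x # y # r) = (if y < x then 1 else 0) + descents (y # r)"
| "descents _ = 0"

lemma card_descent_positions:
  "card {i \<in> {0..<length l - 1}. l ! (i + 1) < l ! i} = descents l"
proof (induction l rule: descents.induct)
  case (1 x y r)
  let ?D = "\<lambda>l. {i \<in> {0..<length l - 1}. l ! (i + 1) < l ! i}"
  have "?D (x # y # r) = (if y < x then {0} else {}) \<union> Suc ` ?D (y # r)"
  proof (rule set_eqI)
    show "i \<in> ?D (x # y # r) \<longleftrightarrow> i \<in> (if y < x then {0} else {}) \<union> Suc ` ?D (y # r)" for i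
      by (cases i) auto
  qed
  then show ?case
    using "1" by (simp add: card_image card_insert_if image_iff)
qed auto

lemma descents_map_strict_mono:
  "strict_mono u \<Longrightarrow> descents (map u l) = descents l"
  by (induction l rule: descents.induct) (simp_all add: strict_mono_less)

lemma sum_split_three:
  fixes f :: "nat \<Rightarrow> 'a::comm_monoid_add"
  assumes "1 \<le> j" "2 * j \<le> n + 1"
  shows "(\<Sum>k=1..n-1. f k) = (\<Sum>k=1..j-1. f k) + (\<Sum>k=j..n-j. f k) + (\<Sum>k=n+1-j..n-1. f k)"
proof -
  have "{1..n-1} = {1..j-1} \<union> {j..n-j} \<union> {n+1-j..n-1}"
    using assms by auto
  moreover have "sum f ({1..j-1} \<union> {j..n-j} \<union> {n+1-j..n-1})
      = sum f ({1..j-1} \<union> {j..n-j}) + sum f {n+1-j..n-1}"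
    using assms by (intro sum.union_disjoint) auto
  moreover have "sum f ({1..j-1} \<union> {j..n-j}) = sum f {1..j-1} + sum f {j..n-j}"
    by (intro sum.union_disjoint) auto
  ultimately show ?thesis
    by simp
qed

lemma sum_split_three_if:
  fixes f :: "nat \<Rightarrow> 'a::comm_semiring_1"
  assumes "1 \<le> j" "2 * j \<le> n + 1"
  shows "(\<Sum>k=1..n-1. (if k < j then a else b) * f k)
           = a * sum f {1..j-1} + b * (sum f {j..n-j} + sum f {n+1-j..n-1})"
    and "(\<Sum>k=1..n-1. (if k < n + 1 - j then a else b) * f k)
           = a * (sum f {1..j-1} + sum f {j..n-j}) + b * sum f {n+1-j..n-1}"
  using assms unfolding sum_split_three[OF assms] distrib_left sum_distrib_left add.assoc
  by (intro arg_cong2[where f = "(+)"] sum.cong refl; auto)+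

lemma sum_reflect:
  fixes f :: "nat \<Rightarrow> 'a::comm_monoid_add"
  assumes "a \<le> n" "b \<le> n"
  shows "(\<Sum>k=a..b. f (n - k)) = (\<Sum>k=n-b..n-a. f k)"
  using assms by (intro sum.reindex_bij_witness[of _ "\<lambda>k. n - k" "\<lambda>k. n - k"]) auto

lemma sum_reflect_prefix:
  fixes f :: "nat \<Rightarrow> 'a::comm_monoid_add"
  assumes "1 \<le> j" "j \<le> n"
  shows "(\<Sum>k=1..j-1. f (n - k)) = (\<Sum>k=n+1-j..n-1. f k)"
  using sum_reflect[of 1 n "j - 1" f] assms by (simp add: Suc_diff_le)

lemma sum_pairs:
  fixes f :: "nat \<Rightarrow> 'a::comm_monoid_add"
  assumes "1 \<le> j" "2 * j \<le> n + 1"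
  shows "(\<Sum>k=j..n div 2. if 2 * k = n then f k else f k + f (n - k)) = (\<Sum>k=j..n-j. f k)"
proof -
  have middle: "2 * k = n \<longleftrightarrow> (n - 1) div 2 < k" if "k \<le> n div 2" for k
    using that assms by presburger
  have "(\<Sum>k=j..n div 2. if 2 * k = n then f k else f k + f (n - k))
      = (\<Sum>k=j..n div 2. f k) + (\<Sum>k=j..n div 2. if 2 * k = n then 0 else f (n - k))"
    unfolding sum.distrib[symmetric] by (intro sum.cong) auto
  also have "(\<Sum>k=j..n div 2. if 2 * k = n then 0 else f (n - k)) = (\<Sum>k=j..(n - 1) div 2. f (n - k))"
    using middle by (intro sum.mono_neutral_cong_right) (auto simp: div_le_mono)
  also have "\<dots> = (\<Sum>k=n div 2 + 1..n-j. f k)"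
    using assms by (subst sum_reflect) (auto intro!: arg_cong[where f = "sum f"])
  also have "(\<Sum>k=j..n div 2. f k) + \<dots> = (\<Sum>k=j..n-j. f k)"
  proof -
    have "{j..n-j} = {j..n div 2} \<union> {n div 2 + 1..n-j}"
      using assms by auto
    then show ?thesis
      by (simp add: sum.union_disjoint)
  qed
  finally show ?thesis .
qed

section \<open>Gamma expansions\<close>

definition gamma_expansion :: "nat \<Rightarrow> (nat \<Rightarrow> 'a::comm_semiring_1) \<Rightarrow> 'a poly" where
  "gamma_expansion m g = (\<Sum>k\<le>m div 2. smult (g k) (monom 1 k * [:1, 1:] ^ (m - 2 * k)))"

definition has_gamma_vector :: "nat \<Rightarrow> 'a::comm_semiring_1 poly \<Rightarrow> (nat \<Rightarrow> 'a) \<Rightarrow> bool" where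
  "has_gamma_vector m P g \<longleftrightarrow> (\<forall>i > m div 2. g i = 0) \<and> P = gamma_expansion m g"

lemma gamma_expansion_eq_0D:
  fixes g :: "nat \<Rightarrow> 'a::comm_ring_1"
  assumes "gamma_expansion m g = 0" and "\<forall>i > m div 2. g i = 0"
  shows "g i = 0"
proof (rule ccontr)
  assume "g i \<noteq> 0"
  define i0 where "i0 = (LEAST i. g i \<noteq> 0)"
  have "g i0 \<noteq> 0"
    unfolding i0_def using \<open>g i \<noteq> 0\<close> by (rule LeastI)
  moreover have "g k = 0" if "k < i0" for k
    using that not_less_Least unfolding i0_def by blast
  moreover have "i0 \<le> m div 2"
    using \<open>g i0 \<noteq> 0\<close> assms(2) by (meson not_le)
  \<comment> \<open>t^k (1 + t)^(m - 2k) has no terms below t^k, so only k = i0 contributes to t^i0.\<close>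
  ultimately have "coeff (gamma_expansion m g) i0 = (\<Sum>k\<le>m div 2. if k = i0 then g i0 else 0)"
    unfolding gamma_expansion_def coeff_sum coeff_smult
    by (intro sum.cong refl) (auto simp: coeff_monom_mult coeff_0_power not_less)
  also have "\<dots> = g i0"
    using \<open>i0 \<le> m div 2\<close> by simp
  finally have "coeff (gamma_expansion m g) i0 = g i0" .
  then show False
    using assms(1) \<open>g i0 \<noteq> 0\<close> by simp
qed

lemma gamma_expansion_add:
  "gamma_expansion m g + gamma_expansion m h = gamma_expansion m (\<lambda>i. g i + h i)"
  unfolding gamma_expansion_def by (simp add: sum.distrib[symmetric] smult_add_left)

lemma gamma_expansion_diff:
  fixes g h :: "nat \<Rightarrow> 'a::comm_ring_1"
  shows "gamma_expansion m g - gamma_expansion m h = gamma_expansion m (\<lambda>i. g i - h i)"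
  unfolding gamma_expansion_def by (simp add: sum_subtractf[symmetric] smult_diff_left)

lemma has_gamma_vector_unique:
  fixes g h :: "nat \<Rightarrow> 'a::comm_ring_1"
  assumes "has_gamma_vector m P g" and "has_gamma_vector m P h"
  shows "g = h"
proof
  fix i
  have "gamma_expansion m (\<lambda>i. g i - h i) = 0"
    using assms unfolding has_gamma_vector_def gamma_expansion_diff[symmetric] by simp
  moreover have "\<forall>i > m div 2. g i - h i = 0"
    using assms unfolding has_gamma_vector_def by simp
  ultimately have "g i - h i = 0"
    by (rule gamma_expansion_eq_0D)
  then show "g i = h i"
    by simp
qed

lemma gamma_vec_eqI:
  assumes "has_gamma_vector m P g"
  shows "gamma_vec m P = g"
proof -
  have "gamma_vec m P = (THE g. has_gamma_vector m P g)"
    unfolding gamma_vec_def has_gamma_vector_def gamma_expansion_def ..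
  also have "\<dots> = g"
    using assms has_gamma_vector_unique by blast
  finally show ?thesis .
qed

lemma has_gamma_vector_gamma_vec: "has_gamma_vector m P g \<Longrightarrow> has_gamma_vector m P (gamma_vec m P)"
  using gamma_vec_eqI by simp

lemma has_gamma_vector_0: "has_gamma_vector m 0 (\<lambda>_. 0)"
  unfolding has_gamma_vector_def gamma_expansion_def by simp

lemma has_gamma_vector_add:
  "has_gamma_vector m P g \<Longrightarrow> has_gamma_vector m Q h \<Longrightarrow> has_gamma_vector m (P + Q) (\<lambda>i. g i + h i)"
  unfolding has_gamma_vector_def by (simp add: gamma_expansion_add)

lemma has_gamma_vector_double:
  "has_gamma_vector m P g \<Longrightarrow> has_gamma_vector m (2 * P) (\<lambda>i. 2 * g i)"
  unfolding mult_2 by (rule has_gamma_vector_add)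

lemma has_gamma_vector_sum:
  "(\<And>k. k \<in> K \<Longrightarrow> has_gamma_vector m (P k) (g k)) \<Longrightarrow>
     has_gamma_vector m (\<Sum>k\<in>K. P k) (\<lambda>i. \<Sum>k\<in>K. g k i)"
proof (induction K rule: infinite_finite_induct)
  case (insert k K)
  then show ?case
    using has_gamma_vector_add[of m "P k" "g k" "\<Sum>k\<in>K. P k" "\<lambda>i. \<Sum>k\<in>K. g k i"] by simp
qed (simp_all add: has_gamma_vector_0)

lemma gamma_expansion_atMost:
  assumes "\<forall>i > m div 2. g i = 0" and "m div 2 \<le> M"
  shows "gamma_expansion m g = (\<Sum>k\<le>M. smult (g k) (monom 1 k * [:1, 1:] ^ (m - 2 * k)))"
  unfolding gamma_expansion_def using assms by (intro sum.mono_neutral_left) auto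

text \<open>The degree m' is a separate variable so that intro can apply these rules to goals whose
  degree, such as n - 1, is not syntactically of the form m + 1.\<close>

lemma has_gamma_vector_mult_1_plus_x:
  assumes "has_gamma_vector m P g" and "m' = m + 1"
  shows "has_gamma_vector m' ([:1, 1:] * P) g"
proof -
  have vanish: "\<forall>i > m div 2. g i = 0" and P: "P = gamma_expansion m g"
    using assms unfolding has_gamma_vector_def by auto
  have half: "m div 2 \<le> Suc m div 2"
    by (simp add: div_le_mono)
  have "[:1, 1:] * P = (\<Sum>k\<le>Suc m div 2. [:1, 1:] * smult (g k) (monom 1 k * [:1, 1:] ^ (m - 2 * k)))"
    unfolding P gamma_expansion_atMost[OF vanish half] sum_distrib_left ..
  also have "\<dots> = gamma_expansion (Suc m) g"
    unfolding gamma_expansion_def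
  proof (intro sum.cong refl)
    fix k assume "k \<in> {..Suc m div 2}"
    show "[:1, 1:] * smult (g k) (monom 1 k * [:1, 1:] ^ (m - 2 * k))
        = smult (g k) (monom 1 k * [:1, 1:] ^ (Suc m - 2 * k))"
    proof (cases "k \<le> m div 2")
      case True
      then have "Suc m - 2 * k = Suc (m - 2 * k)"
        by auto
      then show ?thesis
        by (simp add: algebra_simps)
    qed (use vanish in simp)
  qed
  finally show ?thesis
    using vanish \<open>m' = m + 1\<close> unfolding has_gamma_vector_def by auto
qed

lemma has_gamma_vector_mult_x:
  assumes "has_gamma_vector m P g" and "m' = m + 2"
  shows "has_gamma_vector m' ([:0, 1:] * P) (shift0 g)"
proof -
  have vanish: "\<forall>i > m div 2. g i = 0" and P: "P = gamma_expansion m g"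
    using assms unfolding has_gamma_vector_def by auto
  have "gamma_expansion (m + 2) (shift0 g)
      = (\<Sum>k\<le>Suc (m div 2). smult (shift0 g k) (monom 1 k * [:1, 1:] ^ (m + 2 - 2 * k)))"
    unfolding gamma_expansion_def by simp
  also have "\<dots> = (\<Sum>k\<le>m div 2. smult (g k) (monom 1 (Suc k) * [:1, 1:] ^ (m - 2 * k)))"
    unfolding sum.atMost_Suc_shift by (simp add: shift0_def)
  also have "\<dots> = [:0, 1:] * P"
    unfolding P gamma_expansion_def sum_distrib_left
    by (intro sum.cong refl) (simp add: monom_Suc)
  finally show ?thesis
    using vanish \<open>m' = m + 2\<close> unfolding has_gamma_vector_def shift0_def by auto
qed

section \<open>Deleting the first letter of a signed permutation\<close>

lemma desB_eq_descents: "desB s = descents (0 # s)"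
  using card_descent_positions[of "0 # s"] unfolding desB_def by simp

text \<open>bump a undoes the standardisation of the remaining letters after a letter of absolute
  value a has been deleted; unbump a is that standardisation.\<close>

definition bump :: "int \<Rightarrow> int \<Rightarrow> int" where
  "bump a x = (if a \<le> x then x + 1 else if x \<le> - a then x - 1 else x)"

definition unbump :: "int \<Rightarrow> int \<Rightarrow> int" where
  "unbump a x = (if a < x then x - 1 else if x < - a then x + 1 else x)"

lemma strict_mono_bump: "1 \<le> a \<Longrightarrow> strict_mono (bump a)"
  unfolding strict_mono_def bump_def by auto

lemma abs_bump: "1 \<le> a \<Longrightarrow> x \<noteq> 0 \<Longrightarrow> \<bar>bump a x\<bar> = bump a \<bar>x\<bar>"
  unfolding bump_def by auto

lemma abs_unbump: "1 \<le> a \<Longrightarrow> \<bar>x\<bar> \<noteq> a \<Longrightarrow> \<bar>unbump a x\<bar> = unbump a \<bar>x\<bar>"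
  unfolding unbump_def by auto

lemma bump_unbump: "1 \<le> a \<Longrightarrow> \<bar>x\<bar> \<noteq> a \<Longrightarrow> bump a (unbump a x) = x"
  unfolding bump_def unbump_def by auto

lemma bij_betw_bump:
  "1 \<le> a \<Longrightarrow> a \<le> int N + 1 \<Longrightarrow> bij_betw (bump a) {1..int N} ({1..int N + 1} - {a})"
  by (rule bij_betw_byWitness[where f' = "unbump a"]) (auto simp: bump_def unbump_def)

lemma bij_betw_unbump:
  "1 \<le> a \<Longrightarrow> a \<le> int N + 1 \<Longrightarrow> bij_betw (unbump a) ({1..int N + 1} - {a}) {1..int N}"
  by (rule bij_betw_byWitness[where f' = "bump a"]) (auto simp: bump_def unbump_def)

definition des_gain :: "int \<Rightarrow> int \<Rightarrow> nat" where
  "des_gain j x = (if 0 < j then (if 0 < x \<and> x < j then 1 else 0)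
                   else (if 0 < x \<or> x \<le> j then 1 else 0))"

lemma desB_Cons_bump:
  assumes "j \<noteq> 0" "x \<noteq> 0"
  shows "desB (j # map (bump \<bar>j\<bar>) (x # r)) = desB (x # r) + des_gain j x"
proof -
  have "descents (map (bump \<bar>j\<bar>) (x # r)) = descents (x # r)"
    using assms by (intro descents_map_strict_mono strict_mono_bump) simp
  then have "descents (bump \<bar>j\<bar> x # map (bump \<bar>j\<bar>) r) = descents (x # r)"
    by simp
  then show ?thesis
    using assms unfolding desB_eq_descents descents.simps
    by (auto simp: bump_def des_gain_def)
qed

definition pos_last_perms :: "nat \<Rightarrow> int list set" where
  "pos_last_perms N = {t \<in> signed_perms N. 0 < last t}"

definition signed_range :: "nat \<Rightarrow> int set" where
  "signed_range N = {x. x \<noteq> 0 \<and> \<bar>x\<bar> \<le> int N}"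

lemma finite_signed_perms: "finite (signed_perms N)"
proof (rule finite_subset)
  show "signed_perms N \<subseteq> {xs. set xs \<subseteq> {- int N..int N} \<and> length xs = N}"
    unfolding signed_perms_def by force
  show "finite {xs. set xs \<subseteq> {- int N..int N} \<and> length xs = N}"
    by (rule finite_lists_length_eq) simp
qed

lemma finite_signed_range: "finite (signed_range N)"
  by (rule finite_subset[of _ "{- int N..int N}"]) (auto simp: signed_range_def)

lemma Cons_map_bump_mem_signed_perms:
  assumes n: "2 \<le> n" and j: "1 \<le> \<bar>j\<bar>" "\<bar>j\<bar> \<le> int n" and t: "t \<in> pos_last_perms (n - 1)"
  shows "j # map (bump \<bar>j\<bar>) t \<in> {s \<in> signed_perms n. 0 < last s \<and> hd s = j}"
proof -
  have len: "length t = n - 1" and abs_t: "abs ` set t = {1..int (n - 1)}" and last_t: "0 < last t"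
    using t unfolding pos_last_perms_def signed_perms_def by auto
  have "t \<noteq> []" using len n by auto
  have "0 \<notin> set t"
    using abs_t by force
  then have "abs ` bump \<bar>j\<bar> ` set t = bump \<bar>j\<bar> ` abs ` set t"
    unfolding image_image by (intro image_cong refl abs_bump) (use j in auto)
  also have "\<dots> = {1..int n} - {\<bar>j\<bar>}"
    using abs_t bij_betw_bump[of "\<bar>j\<bar>" "n - 1"] j n by (simp add: bij_betw_def of_nat_diff)
  finally have "abs ` set (j # map (bump \<bar>j\<bar>) t) = {1..int n}"
    using j by auto
  moreover have "0 < bump \<bar>j\<bar> (last t)"
    using last_t j by (simp add: bump_def)
  ultimately show ?thesis
    using len n \<open>t \<noteq> []\<close> by (simp add: signed_perms_def last_map)
qed

lemma signed_perms_with_hd_eq_image: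
  assumes n: "2 \<le> n" and j: "1 \<le> \<bar>j\<bar>" "\<bar>j\<bar> \<le> int n"
  shows "{s \<in> signed_perms n. 0 < last s \<and> hd s = j}
           = (\<lambda>t. j # map (bump \<bar>j\<bar>) t) ` pos_last_perms (n - 1)"
proof (intro equalityI subsetI)
  fix s assume s: "s \<in> {s \<in> signed_perms n. 0 < last s \<and> hd s = j}"
  then have len: "length s = n" and abs_s: "abs ` set s = {1..int n}" and "0 < last s" "hd s = j"
    unfolding signed_perms_def by auto
  then obtain r where s_eq: "s = j # r"
    using n by (cases s) auto
  with len n have "r \<noteq> []"
    by auto
  have "distinct (map abs s)"
    using abs_s len by (intro card_distinct) simp
  then have abs_r: "abs ` set r = {1..int n} - {\<bar>j\<bar>}"
    using abs_s s_eq by (auto simp: image_iff)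
  have abs_ne: "\<bar>x\<bar> \<noteq> \<bar>j\<bar>" if "x \<in> set r" for x
    using abs_r imageI[OF that, of abs] by blast
  let ?t = "map (unbump \<bar>j\<bar>) r"
  have "abs ` set ?t = unbump \<bar>j\<bar> ` abs ` set r"
    unfolding set_map image_image
    by (intro image_cong refl abs_unbump) (use j abs_ne in auto)
  also have "\<dots> = {1..int (n - 1)}"
    using abs_r bij_betw_unbump[of "\<bar>j\<bar>" "n - 1"] j n by (simp add: bij_betw_def of_nat_diff)
  finally have "abs ` set ?t = {1..int (n - 1)}" .
  moreover have "0 < last ?t"
    using \<open>0 < last s\<close> \<open>r \<noteq> []\<close> j(1) s_eq by (auto simp: last_map unbump_def)
  ultimately have "?t \<in> pos_last_perms (n - 1)"
    using len s_eq unfolding pos_last_perms_def signed_perms_def by simp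
  moreover have "s = j # map (bump \<bar>j\<bar>) ?t"
    using abs_ne j s_eq by (auto simp: bump_unbump intro!: map_idI[symmetric])
  ultimately show "s \<in> (\<lambda>t. j # map (bump \<bar>j\<bar>) t) ` pos_last_perms (n - 1)"
    by blast
qed (use Cons_map_bump_mem_signed_perms[OF assms] in blast)

lemma inj_Cons_map_bump: "1 \<le> \<bar>j\<bar> \<Longrightarrow> inj (\<lambda>t. j # map (bump \<bar>j\<bar>) t)"
  using strict_mono_imp_inj_on[OF strict_mono_bump, of "\<bar>j\<bar>" UNIV]
  by (auto intro!: injI simp: inj_map_eq_map)

lemma Bplus_rec:
  assumes n: "2 \<le> n" and j: "1 \<le> \<bar>j\<bar>" "\<bar>j\<bar> \<le> int n"
  shows "Bplus n j = (\<Sum>x\<in>signed_range (n - 1). monom 1 (des_gain j x) * Bplus (n - 1) x)"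
proof -
  let ?P = "pos_last_perms (n - 1)"
  have nonempty: "t \<noteq> []" if "t \<in> ?P" for t
    using that n unfolding pos_last_perms_def signed_perms_def by auto
  have hd_range: "hd ` ?P \<subseteq> signed_range (n - 1)"
  proof
    fix x assume "x \<in> hd ` ?P"
    then obtain t where t: "t \<in> ?P" "x = hd t" by blast
    then have "\<bar>x\<bar> \<in> abs ` set t"
      using nonempty by auto
    then show "x \<in> signed_range (n - 1)"
      using t unfolding pos_last_perms_def signed_perms_def signed_range_def by auto
  qed
  have "Bplus n j = (\<Sum>t\<in>?P. monom 1 (desB (j # map (bump \<bar>j\<bar>) t)))"
    unfolding Bplus_def signed_perms_with_hd_eq_image[OF assms]
    using inj_Cons_map_bump[OF j(1)] by (simp add: sum.reindex inj_on_def inj_def)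
  also have "\<dots> = (\<Sum>x\<in>signed_range (n - 1). \<Sum>t\<in>{t \<in> ?P. hd t = x}. monom 1 (desB (j # map (bump \<bar>j\<bar>) t)))"
    using hd_range finite_signed_perms
    by (intro sum.group[symmetric] finite_signed_range) (auto simp: pos_last_perms_def)
  also have "\<dots> = (\<Sum>x\<in>signed_range (n - 1). \<Sum>t\<in>{t \<in> ?P. hd t = x}. monom 1 (des_gain j x) * monom 1 (desB t))"
  proof (intro sum.cong refl)
    fix x t assume "x \<in> signed_range (n - 1)" "t \<in> {t \<in> ?P. hd t = x}"
    moreover from this obtain y r where "t = y # r"
      using nonempty by (cases t) auto
    ultimately show "monom 1 (desB (j # map (bump \<bar>j\<bar>) t)) = monom 1 (des_gain j x) * (monom 1 (desB t) :: int poly)"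
      using desB_Cons_bump[of j x r] j by (simp add: mult_monom signed_range_def add.commute)
  qed
  also have "\<dots> = (\<Sum>x\<in>signed_range (n - 1). monom 1 (des_gain j x) * Bplus (n - 1) x)"
    unfolding Bplus_def pos_last_perms_def sum_distrib_left
    by (intro sum.cong refl) (auto intro: sum.cong)
  finally show ?thesis .
qed

lemma sum_signed_range:
  "(\<Sum>x\<in>signed_range N. f x) = (\<Sum>k=1..N. f (int k)) + (\<Sum>k=1..N. f (- int k))"
proof -
  have "signed_range N = int ` {1..N} \<union> (\<lambda>k. - int k) ` {1..N}" (is "_ = ?R")
  proof (intro equalityI subsetI)
    fix x assume "x \<in> signed_range N"
    then show "x \<in> int ` {1..N} \<union> (\<lambda>k. - int k) ` {1..N}"
      unfolding signed_range_def
      by (cases "0 < x") (auto intro!: UnI1 UnI2 image_eqI[of _ _ "nat \<bar>x\<bar>"])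
  qed (auto simp: signed_range_def)
  then have "sum f (signed_range N) = sum f ?R"
    by simp
  also have "\<dots> = (\<Sum>k=1..N. f (int k)) + (\<Sum>k=1..N. f (- int k))"
    by (subst sum.union_disjoint) (auto simp: sum.reindex inj_on_def)
  finally show ?thesis .
qed

lemma Bplus_pos_rec:
  assumes "2 \<le> n" "1 \<le> j" "j \<le> n"
  shows "Bplus n (int j) = (\<Sum>k=1..n-1. (if k < j then [:0, 1:] else 1) * Bplus (n - 1) (int k))
                          + (\<Sum>k=1..n-1. Bplus (n - 1) (- int k))"
  using assms by (simp add: Bplus_rec sum_signed_range des_gain_def monom_Suc one_pCons
                      if_distrib[of "\<lambda>d. monom 1 d"] cong: if_cong)

lemma Bplus_neg_rec:
  assumes "2 \<le> n" "1 \<le> j" "j \<le> n"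
  shows "Bplus n (- int j) = (\<Sum>k=1..n-1. [:0, 1:] * Bplus (n - 1) (int k))
                           + (\<Sum>k=1..n-1. (if k < j then 1 else [:0, 1:]) * Bplus (n - 1) (- int k))"
  using assms by (simp add: Bplus_rec sum_signed_range des_gain_def monom_Suc one_pCons
                      if_distrib[of "\<lambda>d. monom 1 d"] cong: if_cong)
                 (auto intro!: sum.cong)

lemma Bplus_pos_split:
  fixes n j :: nat
  defines "b \<equiv> \<lambda>k. Bplus (n - 1) (int k)" and "c \<equiv> \<lambda>k. Bplus (n - 1) (- int k)"
  assumes n: "2 \<le> n" and j: "1 \<le> j" "2 * j \<le> n + 1"
  shows "Bplus n (int j) = [:0, 1:] * sum b {1..j-1} + sum b {j..n-j} + sum b {n+1-j..n-1} + sum c {1..n-1}"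
    and "Bplus n (int (n + 1 - j))
           = [:0, 1:] * (sum b {1..j-1} + sum b {j..n-j}) + sum b {n+1-j..n-1} + sum c {1..n-1}"
proof -
  have "Bplus n (int j) = (\<Sum>k=1..n-1. (if k < j then [:0, 1:] else 1) * b k) + sum c {1..n-1}"
    using Bplus_pos_rec[of n j] n j unfolding b_def c_def by simp
  then show "Bplus n (int j) = [:0, 1:] * sum b {1..j-1} + sum b {j..n-j} + sum b {n+1-j..n-1} + sum c {1..n-1}"
    unfolding sum_split_three_if(1)[OF j] by (simp add: add.assoc)
  have "Bplus n (int (n + 1 - j)) = (\<Sum>k=1..n-1. (if k < n + 1 - j then [:0, 1:] else 1) * b k) + sum c {1..n-1}"
    using Bplus_pos_rec[of n "n + 1 - j"] n j unfolding b_def c_def by simp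
  then show "Bplus n (int (n + 1 - j))
           = [:0, 1:] * (sum b {1..j-1} + sum b {j..n-j}) + sum b {n+1-j..n-1} + sum c {1..n-1}"
    unfolding sum_split_three_if(2)[OF j] by simp
qed

lemma Bplus_neg_split:
  fixes n j :: nat
  defines "b \<equiv> \<lambda>k. Bplus (n - 1) (int k)" and "c \<equiv> \<lambda>k. Bplus (n - 1) (- int k)"
  assumes n: "2 \<le> n" and j: "1 \<le> j" "2 * j \<le> n + 1"
  shows "Bplus n (- int j)
           = [:0, 1:] * sum b {1..n-1} + sum c {1..j-1} + [:0, 1:] * (sum c {j..n-j} + sum c {n+1-j..n-1})"
    and "Bplus n (- int (n + 1 - j))
           = [:0, 1:] * sum b {1..n-1} + sum c {1..j-1} + sum c {j..n-j} + [:0, 1:] * sum c {n+1-j..n-1}"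
proof -
  have "Bplus n (- int j) = [:0, 1:] * sum b {1..n-1} + (\<Sum>k=1..n-1. (if k < j then 1 else [:0, 1:]) * c k)"
    using Bplus_neg_rec[of n j] n j unfolding b_def c_def by (simp add: sum_distrib_left)
  then show "Bplus n (- int j)
           = [:0, 1:] * sum b {1..n-1} + sum c {1..j-1} + [:0, 1:] * (sum c {j..n-j} + sum c {n+1-j..n-1})"
    unfolding sum_split_three_if(1)[OF j] by (simp add: add.assoc)
  have "Bplus n (- int (n + 1 - j))
      = [:0, 1:] * sum b {1..n-1} + (\<Sum>k=1..n-1. (if k < n + 1 - j then 1 else [:0, 1:]) * c k)"
    using Bplus_neg_rec[of n "n + 1 - j"] n j unfolding b_def c_def by (simp add: sum_distrib_left)
  then show "Bplus n (- int (n + 1 - j))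
           = [:0, 1:] * sum b {1..n-1} + sum c {1..j-1} + sum c {j..n-j} + [:0, 1:] * sum c {n+1-j..n-1}"
    unfolding sum_split_three_if(2)[OF j] by (simp add: add.assoc)
qed

section \<open>Recurrences for the bold polynomials\<close>

lemma BBpos_pred:
  "2 \<le> n \<Longrightarrow> BBpos (n - 1) k
     = (if 2 * k = n then Bplus (n - 1) (int k) else Bplus (n - 1) (int k) + Bplus (n - 1) (int (n - k)))"
  unfolding BBpos_def by simp

lemma BBneg_pred:
  "2 \<le> n \<Longrightarrow> BBneg (n - 1) k
     = (if 2 * k = n then Bplus (n - 1) (- int k) else Bplus (n - 1) (- int k) + Bplus (n - 1) (- int (n - k)))"
  unfolding BBneg_def by simp

lemma sum_BBpos_pred:
  "2 \<le> n \<Longrightarrow> 1 \<le> j \<Longrightarrow> 2 * j \<le> n + 1 \<Longrightarrow>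
     (\<Sum>k=j..n div 2. BBpos (n - 1) k) = (\<Sum>k=j..n-j. Bplus (n - 1) (int k))"
  unfolding BBpos_pred by (rule sum_pairs)

lemma sum_BBneg_pred:
  "2 \<le> n \<Longrightarrow> 1 \<le> j \<Longrightarrow> 2 * j \<le> n + 1 \<Longrightarrow>
     (\<Sum>k=j..n div 2. BBneg (n - 1) k) = (\<Sum>k=j..n-j. Bplus (n - 1) (- int k))"
  unfolding BBneg_pred by (rule sum_pairs)

lemma sum_BBpos_pred_all:
  "2 \<le> n \<Longrightarrow> (\<Sum>k=1..n div 2. BBpos (n - 1) k) = (\<Sum>k=1..n-1. Bplus (n - 1) (int k))"
  using sum_BBpos_pred[of n 1] by simp

lemma sum_BBneg_pred_all:
  "2 \<le> n \<Longrightarrow> (\<Sum>k=1..n div 2. BBneg (n - 1) k) = (\<Sum>k=1..n-1. Bplus (n - 1) (- int k))"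
  using sum_BBneg_pred[of n 1] by simp

lemma sum_BBtpos_pred:
  assumes "2 \<le> n" "1 \<le> j" "j \<le> n"
  shows "(\<Sum>k=1..j-1. BBtpos (n - 1) k)
           = [:0, 1:] * (\<Sum>k=1..j-1. Bplus (n - 1) (int k)) + (\<Sum>k=n+1-j..n-1. Bplus (n - 1) (int k))"
proof -
  have "(\<Sum>k=1..j-1. BBtpos (n - 1) k)
      = (\<Sum>k=1..j-1. [:0, 1:] * Bplus (n - 1) (int k) + Bplus (n - 1) (int (n - k)))"
    using assms by (intro sum.cong) (simp_all add: BBtpos_def)
  also have "\<dots> = [:0, 1:] * (\<Sum>k=1..j-1. Bplus (n - 1) (int k)) + (\<Sum>k=n+1-j..n-1. Bplus (n - 1) (int k))"
    unfolding sum.distrib sum_distrib_left[symmetric]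
      sum_reflect_prefix[OF assms(2,3), of "\<lambda>k. Bplus (n - 1) (int k)"] ..
  finally show ?thesis .
qed

lemma sum_BBtneg_pred:
  assumes "2 \<le> n" "1 \<le> j" "j \<le> n"
  shows "(\<Sum>k=1..j-1. BBtneg (n - 1) k)
           = [:0, 1:] * (\<Sum>k=n+1-j..n-1. Bplus (n - 1) (- int k)) + (\<Sum>k=1..j-1. Bplus (n - 1) (- int k))"
proof -
  have "(\<Sum>k=1..j-1. BBtneg (n - 1) k)
      = (\<Sum>k=1..j-1. [:0, 1:] * Bplus (n - 1) (- int (n - k)) + Bplus (n - 1) (- int k))"
    using assms by (intro sum.cong) (simp_all add: BBtneg_def)
  also have "\<dots> = [:0, 1:] * (\<Sum>k=n+1-j..n-1. Bplus (n - 1) (- int k)) + (\<Sum>k=1..j-1. Bplus (n - 1) (- int k))"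
    unfolding sum.distrib sum_distrib_left[symmetric]
      sum_reflect_prefix[OF assms(2,3), of "\<lambda>k. Bplus (n - 1) (- int k)"] ..
  finally show ?thesis .
qed

lemma poly_1_plus_x: "[:1, 1:] = 1 + [:0, 1:]"
  by (simp add: one_pCons)

lemma BBpos_middle_rec:
  assumes n: "2 \<le> n" and "odd n"
  shows "BBpos n ((n + 1) div 2) = (\<Sum>k=1..(n - 1) div 2. BBtpos (n - 1) k + BBneg (n - 1) k)"
proof -
  define h where "h = (n + 1) div 2"
  have h: "2 * h = n + 1" "1 \<le> h" "h \<le> n" "(n - 1) div 2 = h - 1" "n div 2 = h - 1"
    using assms unfolding h_def by (auto elim: oddE)
  have "BBpos n h = Bplus n (int h)"
    using h by (simp add: BBpos_def)
  then show ?thesis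
    unfolding h_def[symmetric] h(4) sum.distrib Bplus_pos_split[OF n h(2) order_eq_refl[OF h(1)]]
      sum_BBtpos_pred[OF n h(2,3)] sum_BBneg_pred_all[OF n, unfolded h(5)]
    using h(1) by (simp add: algebra_simps)
qed

lemma BBneg_middle_rec:
  assumes n: "2 \<le> n" and "odd n"
  shows "BBneg n ((n + 1) div 2) = (\<Sum>k=1..(n - 1) div 2. BBtneg (n - 1) k + [:0, 1:] * BBpos (n - 1) k)"
proof -
  define h where "h = (n + 1) div 2"
  have h: "2 * h = n + 1" "1 \<le> h" "h \<le> n" "(n - 1) div 2 = h - 1" "n div 2 = h - 1"
    using assms unfolding h_def by (auto elim: oddE)
  have "BBneg n h = Bplus n (- int h)"
    using h by (simp add: BBneg_def)
  then show ?thesis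
    unfolding h_def[symmetric] h(4) sum.distrib Bplus_neg_split[OF n h(2) order_eq_refl[OF h(1)]]
      sum_distrib_left[symmetric] sum_BBtneg_pred[OF n h(2,3)] sum_BBpos_pred_all[OF n, unfolded h(5)]
    using h(1) by (simp add: algebra_simps)
qed

lemma BBpos_rec:
  assumes n: "2 \<le> n" and j: "1 \<le> j" "2 * j < n + 1"
  shows "BBpos n j = 2 * (\<Sum>k=1..n div 2. BBneg (n - 1) k) + 2 * (\<Sum>k=1..j-1. BBtpos (n - 1) k)
                     + [:1, 1:] * (\<Sum>k=j..n div 2. BBpos (n - 1) k)"
proof -
  have j': "2 * j \<le> n + 1" "j \<le> n"
    using j by simp_all
  have "BBpos n j = Bplus n (int j) + Bplus n (int (n + 1 - j))"
    using j by (simp add: BBpos_def)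
  \<comment> \<open>The opaque name X for t = [:0, 1:] keeps the simplifier from rewriting [:0, 1:] * p to
    pCons 0 p, so both sides normalise to the same ring expression in the block sums.\<close>
  moreover define X where "X = ([:0, 1:] :: int poly)"
  ultimately show ?thesis
    unfolding Bplus_pos_split[OF n j(1) j'(1)] sum_BBneg_pred_all[OF n]
      sum_BBtpos_pred[OF n j(1) j'(2)] sum_BBpos_pred[OF n j(1) j'(1)] poly_1_plus_x X_def[symmetric]
    by (simp add: algebra_simps)
qed

lemma BBneg_rec:
  assumes n: "2 \<le> n" and j: "1 \<le> j" "2 * j < n + 1"
  shows "BBneg n j = 2 * (\<Sum>k=1..n div 2. [:0, 1:] * BBpos (n - 1) k) + 2 * (\<Sum>k=1..j-1. BBtneg (n - 1) k)
                     + [:1, 1:] * (\<Sum>k=j..n div 2. BBneg (n - 1) k)"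
proof -
  have j': "2 * j \<le> n + 1" "j \<le> n"
    using j by simp_all
  have "BBneg n j = Bplus n (- int j) + Bplus n (- int (n + 1 - j))"
    using j by (simp add: BBneg_def)
  moreover define X where "X = ([:0, 1:] :: int poly)"
  ultimately show ?thesis
    unfolding Bplus_neg_split[OF n j(1) j'(1)] sum_distrib_left[symmetric] sum_BBpos_pred_all[OF n]
      sum_BBtneg_pred[OF n j(1) j'(2)] sum_BBneg_pred[OF n j(1) j'(1)] poly_1_plus_x X_def[symmetric]
    by (simp add: algebra_simps)
qed

lemma BBtpos_rec:
  assumes n: "2 \<le> n" and j: "1 \<le> j" "2 * j < n + 1"
  shows "BBtpos n j = [:1, 1:] * (\<Sum>k=1..j-1. BBtpos (n - 1) k) + 2 * (\<Sum>k=j..n div 2. [:0, 1:] * BBpos (n - 1) k)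
                      + [:1, 1:] * (\<Sum>k=1..n div 2. BBneg (n - 1) k)"
proof -
  have j': "2 * j \<le> n + 1" "j \<le> n"
    using j by simp_all
  have "BBtpos n j = [:0, 1:] * Bplus n (int j) + Bplus n (int (n + 1 - j))"
    by (simp add: BBtpos_def)
  moreover define X where "X = ([:0, 1:] :: int poly)"
  ultimately show ?thesis
    unfolding Bplus_pos_split[OF n j(1) j'(1)] sum_distrib_left[symmetric] sum_BBneg_pred_all[OF n]
      sum_BBtpos_pred[OF n j(1) j'(2)] sum_BBpos_pred[OF n j(1) j'(1)] poly_1_plus_x X_def[symmetric]
    by (simp add: algebra_simps)
qed

lemma BBtneg_rec:
  assumes n: "2 \<le> n" and j: "1 \<le> j" "2 * j < n + 1"
  shows "BBtneg n j = [:1, 1:] * (\<Sum>k=1..j-1. BBtneg (n - 1) k) + 2 * (\<Sum>k=j..n div 2. [:0, 1:] * BBneg (n - 1) k)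
                      + [:1, 1:] * (\<Sum>k=1..n div 2. [:0, 1:] * BBpos (n - 1) k)"
proof -
  have j': "2 * j \<le> n + 1" "j \<le> n"
    using j by simp_all
  have "BBtneg n j = [:0, 1:] * Bplus n (- int (n + 1 - j)) + Bplus n (- int j)"
    by (simp add: BBtneg_def)
  moreover define X where "X = ([:0, 1:] :: int poly)"
  ultimately show ?thesis
    unfolding Bplus_neg_split[OF n j(1) j'(1)] sum_distrib_left[symmetric] sum_BBpos_pred_all[OF n]
      sum_BBtneg_pred[OF n j(1) j'(2)] sum_BBneg_pred[OF n j(1) j'(1)] poly_1_plus_x X_def[symmetric]
    by (simp add: algebra_simps)
qed

section \<open>Recurrences for the gamma vectors\<close>

text \<open>gamma_vec is a definite description, so its recurrences can only be read off once the
  expansions are known to exist; this is the induction invariant that provides them.\<close>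

definition gamma_expandable :: "nat \<Rightarrow> bool" where
  "gamma_expandable N \<longleftrightarrow>
     (\<forall>k. 1 \<le> k \<and> 2 * k \<le> N + 1 \<longrightarrow>
        (\<exists>g. has_gamma_vector (N - 1) (BBpos N k) g) \<and> (\<exists>g. has_gamma_vector N (BBneg N k) g)) \<and>
     (\<forall>k. 1 \<le> k \<and> 2 * k < N + 1 \<longrightarrow>
        (\<exists>g. has_gamma_vector N (BBtpos N k) g) \<and> (\<exists>g. has_gamma_vector (N + 1) (BBtneg N k) g))"

lemma gamma_expandableD:
  assumes "gamma_expandable N" and "1 \<le> k"
  shows "2 * k \<le> N + 1 \<Longrightarrow> m = N - 1 \<Longrightarrow> has_gamma_vector m (BBpos N k) (gam_pos N k)"
    and "2 * k \<le> N + 1 \<Longrightarrow> m = N \<Longrightarrow> has_gamma_vector m (BBneg N k) (gam_neg N k)"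
    and "2 * k < N + 1 \<Longrightarrow> m = N \<Longrightarrow> has_gamma_vector m (BBtpos N k) (gamt_pos N k)"
    and "2 * k < N + 1 \<Longrightarrow> m = N + 1 \<Longrightarrow> has_gamma_vector m (BBtneg N k) (gamt_neg N k)"
  using assms unfolding gamma_expandable_def gam_pos_def gam_neg_def gamt_pos_def gamt_neg_def
  by (blast intro: has_gamma_vector_gamma_vec)+

lemma has_gamma_vector_BBpos_middle:
  assumes n: "2 \<le> n" "odd n" and prev: "gamma_expandable (n - 1)"
  shows "has_gamma_vector (n - 1) (BBpos n ((n + 1) div 2))
           (\<lambda>i. \<Sum>k=1..(n - 1) div 2. gamt_pos (n - 1) k i + gam_neg (n - 1) k i)"
  unfolding BBpos_middle_rec[OF n]
  using n by (intro has_gamma_vector_sum has_gamma_vector_add gamma_expandableD[OF prev]) auto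

lemma has_gamma_vector_BBneg_middle:
  assumes n: "2 \<le> n" "odd n" and prev: "gamma_expandable (n - 1)"
  shows "has_gamma_vector n (BBneg n ((n + 1) div 2))
           (\<lambda>i. \<Sum>k=1..(n - 1) div 2. gamt_neg (n - 1) k i + shift0 (gam_pos (n - 1) k) i)"
  unfolding BBneg_middle_rec[OF n]
  using n by (intro has_gamma_vector_sum has_gamma_vector_add has_gamma_vector_mult_x
                gamma_expandableD[OF prev]) auto

lemma has_gamma_vector_BBpos:
  assumes n: "2 \<le> n" and prev: "gamma_expandable (n - 1)" and j: "1 \<le> j" "2 * j < n + 1"
  shows "has_gamma_vector (n - 1) (BBpos n j)
           (\<lambda>i. 2 * (\<Sum>k=1..n div 2. gam_neg (n - 1) k i) + 2 * (\<Sum>k=1..j - 1. gamt_pos (n - 1) k i)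
                + (\<Sum>k=j..n div 2. gam_pos (n - 1) k i))"
  unfolding BBpos_rec[OF n j]
  using n j by (intro has_gamma_vector_add has_gamma_vector_double has_gamma_vector_sum
                  has_gamma_vector_mult_1_plus_x gamma_expandableD[OF prev]) auto

lemma has_gamma_vector_BBneg:
  assumes n: "2 \<le> n" and prev: "gamma_expandable (n - 1)" and j: "1 \<le> j" "2 * j < n + 1"
  shows "has_gamma_vector n (BBneg n j)
           (\<lambda>i. 2 * (\<Sum>k=1..n div 2. shift0 (gam_pos (n - 1) k) i) + 2 * (\<Sum>k=1..j - 1. gamt_neg (n - 1) k i)
                + (\<Sum>k=j..n div 2. gam_neg (n - 1) k i))"
  unfolding BBneg_rec[OF n j]
  using n j by (intro has_gamma_vector_add has_gamma_vector_double has_gamma_vector_sum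
                  has_gamma_vector_mult_1_plus_x has_gamma_vector_mult_x gamma_expandableD[OF prev]) auto

lemma has_gamma_vector_BBtpos:
  assumes n: "2 \<le> n" and prev: "gamma_expandable (n - 1)" and j: "1 \<le> j" "2 * j < n + 1"
  shows "has_gamma_vector n (BBtpos n j)
           (\<lambda>i. (\<Sum>k=1..j - 1. gamt_pos (n - 1) k i) + 2 * (\<Sum>k=j..n div 2. shift0 (gam_pos (n - 1) k) i)
                + (\<Sum>k=1..n div 2. gam_neg (n - 1) k i))"
  unfolding BBtpos_rec[OF n j]
  using n j by (intro has_gamma_vector_add has_gamma_vector_double has_gamma_vector_sum
                  has_gamma_vector_mult_1_plus_x has_gamma_vector_mult_x gamma_expandableD[OF prev]) auto

lemma has_gamma_vector_BBtneg:
  assumes n: "2 \<le> n" and prev: "gamma_expandable (n - 1)" and j: "1 \<le> j" "2 * j < n + 1"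
  shows "has_gamma_vector (n + 1) (BBtneg n j)
           (\<lambda>i. (\<Sum>k=1..j - 1. gamt_neg (n - 1) k i) + 2 * (\<Sum>k=j..n div 2. shift0 (gam_neg (n - 1) k) i)
                + (\<Sum>k=1..n div 2. shift0 (gam_pos (n - 1) k) i))"
  unfolding BBtneg_rec[OF n j]
  using n j by (intro has_gamma_vector_add has_gamma_vector_double has_gamma_vector_sum
                  has_gamma_vector_mult_1_plus_x has_gamma_vector_mult_x gamma_expandableD[OF prev]) auto

lemma signed_perms_1: "signed_perms 1 = {[1], [-1]}"
proof (intro equalityI subsetI)
  fix s assume "s \<in> signed_perms 1"
  then obtain x where "s = [x]" "\<bar>x\<bar> = 1"
    unfolding signed_perms_def by (auto simp: length_Suc_conv)
  then show "s \<in> {[1], [-1]}"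
    by (auto simp: abs_eq_iff)
qed (auto simp: signed_perms_def)

lemma gamma_expandable_1: "gamma_expandable 1"
proof -
  have perms: "{s \<in> signed_perms 1. 0 < last s \<and> hd s = 1} = {[1]}"
    "{s \<in> signed_perms 1. 0 < last s \<and> hd s = - 1} = {}"
    unfolding signed_perms_1 by auto
  have "Bplus 1 1 = 1" and "Bplus 1 (- 1) = 0"
    unfolding Bplus_def perms by (simp_all add: desB_eq_descents)
  then have pos: "has_gamma_vector 0 (BBpos 1 1) (\<lambda>i. if i = 0 then 1 else 0)"
    and neg: "has_gamma_vector 1 (BBneg 1 1) (\<lambda>_. 0)"
    by (simp_all add: BBpos_def BBneg_def has_gamma_vector_def gamma_expansion_def)
  show ?thesis
    unfolding gamma_expandable_def
  proof (intro conjI allI impI)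
    fix k :: nat assume "1 \<le> k \<and> 2 * k \<le> 1 + 1"
    then have "k = 1"
      by simp
    then show "\<exists>g. has_gamma_vector (1 - 1) (BBpos 1 k) g" "\<exists>g. has_gamma_vector 1 (BBneg 1 k) g"
      using pos neg by auto
  qed auto
qed

lemma gamma_expandable_Suc:
  assumes "1 \<le> N" and "gamma_expandable N"
  shows "gamma_expandable (Suc N)"
proof -
  define n where "n = Suc N"
  have n: "2 \<le> n" and prev: "gamma_expandable (n - 1)"
    using assms unfolding n_def by simp_all
  have middle: "odd n" "k = (n + 1) div 2" if "2 * k = n + 1" for k
    using that by presburger+
  show ?thesis
    unfolding n_def[symmetric] gamma_expandable_def
  proof (intro conjI allI impI)
    fix k assume k: "1 \<le> k \<and> 2 * k \<le> n + 1"
    show "\<exists>g. has_gamma_vector (n - 1) (BBpos n k) g"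
    proof (cases "2 * k = n + 1")
      case True
      then show ?thesis
        using has_gamma_vector_BBpos_middle[OF n middle(1) prev] middle(2) by blast
    qed (use k has_gamma_vector_BBpos[OF n prev, of k] in auto)
    show "\<exists>g. has_gamma_vector n (BBneg n k) g"
    proof (cases "2 * k = n + 1")
      case True
      then show ?thesis
        using has_gamma_vector_BBneg_middle[OF n middle(1) prev] middle(2) by blast
    qed (use k has_gamma_vector_BBneg[OF n prev, of k] in auto)
  next
    fix k assume "1 \<le> k \<and> 2 * k < n + 1"
    then show "\<exists>g. has_gamma_vector n (BBtpos n k) g" "\<exists>g. has_gamma_vector (n + 1) (BBtneg n k) g"
      using has_gamma_vector_BBtpos[OF n prev, of k] has_gamma_vector_BBtneg[OF n prev, of k] by auto
  qed
qed

lemma gamma_expandable_all: "1 \<le> N \<Longrightarrow> gamma_expandable N"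
proof (induction N rule: dec_induct)
  case base
  show ?case
    by (fact gamma_expandable_1)
next
  case (step N)
  then show ?case
    by (intro gamma_expandable_Suc)
qed

theorem lemma3p3:
  fixes n :: nat
  assumes "n \<ge> 2"
  shows
   "(odd n \<longrightarrow> (\<forall>i. gam_pos n ((n + 1) div 2) i =
        (\<Sum>k=1..(n - 1) div 2. gamt_pos (n - 1) k i + gam_neg (n - 1) k i))) \<and>
    (odd n \<longrightarrow> (\<forall>i. gam_neg n ((n + 1) div 2) i =
        (\<Sum>k=1..(n - 1) div 2. gamt_neg (n - 1) k i + shift0 (gam_pos (n - 1) k) i))) \<and>
    (\<forall>j. 1 \<le> j \<and> 2 * j < n + 1 \<longrightarrow> (\<forall>i.
       gam_pos n j i =
         2 * (\<Sum>k=1..n div 2. gam_neg (n - 1) k i)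
         + 2 * (\<Sum>k=1..j - 1. gamt_pos (n - 1) k i)
         + (\<Sum>k=j..n div 2. gam_pos (n - 1) k i))) \<and>
    (\<forall>j. 1 \<le> j \<and> 2 * j < n + 1 \<longrightarrow> (\<forall>i.
       gam_neg n j i =
         2 * (\<Sum>k=1..n div 2. shift0 (gam_pos (n - 1) k) i)
         + 2 * (\<Sum>k=1..j - 1. gamt_neg (n - 1) k i)
         + (\<Sum>k=j..n div 2. gam_neg (n - 1) k i))) \<and>
    (\<forall>j. 1 \<le> j \<and> 2 * j < n + 1 \<longrightarrow> (\<forall>i.
       gamt_pos n j i =
         (\<Sum>k=1..j - 1. gamt_pos (n - 1) k i)
         + 2 * (\<Sum>k=j..n div 2. shift0 (gam_pos (n - 1) k) i)
         + (\<Sum>k=1..n div 2. gam_neg (n - 1) k i))) \<and>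
    (\<forall>j. 1 \<le> j \<and> 2 * j < n + 1 \<longrightarrow> (\<forall>i.
       gamt_neg n j i =
         (\<Sum>k=1..j - 1. gamt_neg (n - 1) k i)
         + 2 * (\<Sum>k=j..n div 2. shift0 (gam_neg (n - 1) k) i)
         + (\<Sum>k=1..n div 2. shift0 (gam_pos (n - 1) k) i)))"
proof -
  have prev: "gamma_expandable (n - 1)"
    using assms by (simp add: gamma_expandable_all)
  note eqs = gamma_vec_eqI[OF has_gamma_vector_BBpos_middle[OF assms _ prev]]
    gamma_vec_eqI[OF has_gamma_vector_BBneg_middle[OF assms _ prev]]
    gamma_vec_eqI[OF has_gamma_vector_BBpos[OF assms prev]]
    gamma_vec_eqI[OF has_gamma_vector_BBneg[OF assms prev]]
    gamma_vec_eqI[OF has_gamma_vector_BBtpos[OF assms prev]]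
    gamma_vec_eqI[OF has_gamma_vector_BBtneg[OF assms prev]]
  show ?thesis
    unfolding gam_pos_def[of n] gam_neg_def[of n] gamt_pos_def[of n] gamt_neg_def[of n]
    using eqs by auto
qed

end
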